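(* Let $(X,d,\preccurlyeq)$ be a preordered $s$-regular $b$-metric space. Let $T,S:X\to X$ be self mappings and suppose there exists $x_0\in X$ such that $T(x_0)\succcurlyeq S(x_0)$. Suppose that: (i) $T$ is isotone; (ii) $S$ covers $T$ from above on the set $O^*_X(x_0)$; (iii) every chain $C\in\mathcal{C}^*(x_0,T,S,\preccurlyeq)$ has an upper bound $w\in X$ (i.e. $x\preccurlyeq w$ for all $x\in C$) satisfying $w\succcurlyeq T(w)$, and there exists $z\in X$ such that $S^i(z)\succcurlyeq S(w)\succcurlyeq T(w)$ for all $i\in\mathbb{N}$ and $d(T^i(w),S^i(z))\to 0$ as $i\to\infty$. Then the set $\mathrm{Coin}(T,S)\cap O^*_X(x_0)$ is nonempty and contains a maximal element.
   Context: A $b$-metric space with coefficient $s\ge 1$ is a nonempty set $X$ with a function $d:X\times X\to[0,\infty)$ such that for all $x,y,z\in X$: $d(x,y)=0$ iff $x=y$; $d(x,y)=d(y,x)$; $d(x,y)\le s[d(x,z)+d(z,y)]$. A preorder is a reflexive and transitive binary relation $\preccurlyeq$; $x\succcurlyeq y$ means $y\preccurlyeq x$, and $x\prec y$ means $x\preccurlyeq y$ and $x\ne y$. A preordered $s$-regular $b$-metric space $(X,d,\preccurlyeq)$ is a $b$-metric space with coefficient $s\ge1$ equipped with a preorder $\preccurlyeq$ such that for all $x,y,z\in X$, $x\preccurlyeq y\preccurlyeq z$ implies $\max\{d(x,y),d(y,z)\}\le s^2 d(x,z)$. A chain is a subset of $X$ any two elements of which are comparable. A map $T$ is isotone if $x\preccurlyeq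 y$ implies $T(x)\preccurlyeq T(y)$. $T^i$ denotes the $i$-th iterate. For $x_0\in X$, $O^*_X(x_0)=\{x\in X: x\succcurlyeq x_0\}$. $\mathrm{Coin}(T,S)=\{x: T(x)=S(x)\}$. A map $S$ covers a map $T$ from above on a set $A\subset X$ if for every $x\in A$ with $T(x)\succcurlyeq S(x)$ there exists $y\in X$ with $y\succcurlyeq x$ and $S(y)=T(x)$. $\mathcal{C}^*(T,S,\preccurlyeq)$ is the set of chains $C\subset X$ such that for all $x,y\in C$: $T(x)\succcurlyeq S(x)$; $x\prec y$ implies $T(x)\preccurlyeq S(y)$; and $S(C)\subset T(X)$. $\mathcal{C}^*(x_0,T,S,\preccurlyeq)=\{C\in\mathcal{C}^*(T,S,\preccurlyeq): C\subset O^*_X(x_0)\text{ and } S(C)\subset T(O^*_X(x_0))\}$. A maximal element of a set $A\subset X$ is an element $w\in A$ such that there is no $u\in A$ with $w\prec u$. *)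

theory Defs
  imports "HOL-Analysis.Analysis"
begin

definition b_metric :: "'a set \<Rightarrow> ('a \<Rightarrow> 'a \<Rightarrow> real) \<Rightarrow> real \<Rightarrow> bool" where
  "b_metric X d s \<longleftrightarrow> X \<noteq> {} \<and> s \<ge> 1 \<and>
     (\<forall>x\<in>X. \<forall>y\<in>X. d x y \<ge> 0) \<and>
     (\<forall>x\<in>X. \<forall>y\<in>X. d x y = 0 \<longleftrightarrow> x = y) \<and>
     (\<forall>x\<in>X. \<forall>y\<in>X. d x y = d y x) \<and>
     (\<forall>x\<in>X. \<forall>y\<in>X. \<forall>z\<in>X. d x y \<le> s * (d x z + d z y))"

definition preorder_on :: "'a set \<Rightarrow> ('a \<Rightarrow> 'a \<Rightarrow> bool) \<Rightarrow> bool" where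
  "preorder_on X le \<longleftrightarrow> (\<forall>x\<in>X. le x x) \<and>
     (\<forall>x\<in>X. \<forall>y\<in>X. \<forall>z\<in>X. le x y \<longrightarrow> le y z \<longrightarrow> le x z)"

definition preordered_s_regular_b_metric ::
  "'a set \<Rightarrow> ('a \<Rightarrow> 'a \<Rightarrow> real) \<Rightarrow> real \<Rightarrow> ('a \<Rightarrow> 'a \<Rightarrow> bool) \<Rightarrow> bool" where
  "preordered_s_regular_b_metric X d s le \<longleftrightarrow> b_metric X d s \<and> preorder_on X le \<and>
     (\<forall>x\<in>X. \<forall>y\<in>X. \<forall>z\<in>X. le x y \<longrightarrow> le y z \<longrightarrow> max (d x y) (d y z) \<le> s\<^sup>2 * d x z)"

definition strict :: "('a \<Rightarrow> 'a \<Rightarrow> bool) \<Rightarrow> 'a \<Rightarrow> 'a \<Rightarrow> bool" where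
  "strict le x y \<longleftrightarrow> le x y \<and> x \<noteq> y"

definition is_chain :: "'a set \<Rightarrow> ('a \<Rightarrow> 'a \<Rightarrow> bool) \<Rightarrow> 'a set \<Rightarrow> bool" where
  "is_chain X le C \<longleftrightarrow> C \<subseteq> X \<and> (\<forall>x\<in>C. \<forall>y\<in>C. le x y \<or> le y x)"

definition isotone :: "'a set \<Rightarrow> ('a \<Rightarrow> 'a \<Rightarrow> bool) \<Rightarrow> ('a \<Rightarrow> 'a) \<Rightarrow> bool" where
  "isotone X le T \<longleftrightarrow> (\<forall>x\<in>X. \<forall>y\<in>X. le x y \<longrightarrow> le (T x) (T y))"

definition Ostar :: "'a set \<Rightarrow> ('a \<Rightarrow> 'a \<Rightarrow> bool) \<Rightarrow> 'a \<Rightarrow> 'a set" where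
  "Ostar X le x0 = {x\<in>X. le x0 x}"

definition Coin :: "'a set \<Rightarrow> ('a \<Rightarrow> 'a) \<Rightarrow> ('a \<Rightarrow> 'a) \<Rightarrow> 'a set" where
  "Coin X T S = {x\<in>X. T x = S x}"

definition covers_from_above ::
  "'a set \<Rightarrow> ('a \<Rightarrow> 'a \<Rightarrow> bool) \<Rightarrow> ('a \<Rightarrow> 'a) \<Rightarrow> ('a \<Rightarrow> 'a) \<Rightarrow> 'a set \<Rightarrow> bool" where
  "covers_from_above X le S T A \<longleftrightarrow>
     (\<forall>x\<in>A. le (S x) (T x) \<longrightarrow> (\<exists>y\<in>X. le x y \<and> S y = T x))"

definition Cstar :: "'a set \<Rightarrow> ('a \<Rightarrow> 'a) \<Rightarrow> ('a \<Rightarrow> 'a) \<Rightarrow> ('a \<Rightarrow> 'a \<Rightarrow> bool) \<Rightarrow> 'a set set" where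
  "Cstar X T S le = {C. is_chain X le C \<and>
     (\<forall>x\<in>C. le (S x) (T x)) \<and>
     (\<forall>x\<in>C. \<forall>y\<in>C. strict le x y \<longrightarrow> le (T x) (S y)) \<and>
     S ` C \<subseteq> T ` X}"

definition Cstar0 :: "'a set \<Rightarrow> 'a \<Rightarrow> ('a \<Rightarrow> 'a) \<Rightarrow> ('a \<Rightarrow> 'a) \<Rightarrow> ('a \<Rightarrow> 'a \<Rightarrow> bool) \<Rightarrow> 'a set set" where
  "Cstar0 X x0 T S le = {C \<in> Cstar X T S le. C \<subseteq> Ostar X le x0 \<and> S ` C \<subseteq> T ` (Ostar X le x0)}"

definition maximal_in :: "('a \<Rightarrow> 'a \<Rightarrow> bool) \<Rightarrow> 'a set \<Rightarrow> 'a \<Rightarrow> bool" where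
  "maximal_in le A w \<longleftrightarrow> w \<in> A \<and> \<not> (\<exists>u\<in>A. strict le w u)"

end

theory Submission
  imports Defs
begin

text \<open>Regularity makes the preorder antisymmetric, so Zorn's lemma applies to the set of
  coincidence points above \<open>x0\<close>, ordered by \<open>le\<close>. A nonempty chain of coincidence points
  belongs to \<open>Cstar0 X x0 T S le\<close>, hence has an upper bound \<open>w\<close> with \<open>T w \<preceq> w\<close> and an
  associated \<open>z\<close>. Since \<open>T\<close> is isotone, \<open>T\<^sup>i\<^sup>+\<^sup>1 w \<preceq> T w \<preceq> S w \<preceq> S\<^sup>i\<^sup>+\<^sup>1 z\<close>, and applying
  regularity twice gives \<open>d (T w) (S w) \<le> s\<^sup>4 d (T\<^sup>i\<^sup>+\<^sup>1 w) (S\<^sup>i\<^sup>+\<^sup>1 z)\<close>, which tends to 0; so \<open>w\<close> is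
  itself a coincidence point. Covering from above yields \<open>y \<succeq> x0\<close> with \<open>S y = T x0\<close>,
  and the chain \<open>{y}\<close> shows that the set is nonempty.\<close>

lemma b_metric_dist_nonneg: "b_metric X d s \<Longrightarrow> x \<in> X \<Longrightarrow> y \<in> X \<Longrightarrow> 0 \<le> d x y"
  unfolding b_metric_def by auto

lemma b_metric_dist_eq_0_iff:
  "b_metric X d s \<Longrightarrow> x \<in> X \<Longrightarrow> y \<in> X \<Longrightarrow> d x y = 0 \<longleftrightarrow> x = y"
  unfolding b_metric_def by auto

lemma preordered_s_regular_b_metricD:
  assumes "preordered_s_regular_b_metric X d s le"
  shows "b_metric X d s" and "preorder_on X le"
    and "\<lbrakk>x \<in> X; y \<in> X; z \<in> X; le x y; le y z\<rbrakk> \<Longrightarrow> d x y \<le> s\<^sup>2 * d x z"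
    and "\<lbrakk>x \<in> X; y \<in> X; z \<in> X; le x y; le y z\<rbrakk> \<Longrightarrow> d y z \<le> s\<^sup>2 * d x z"
  using assms unfolding preordered_s_regular_b_metric_def by auto

lemma preorder_onD:
  assumes "preorder_on X le"
  shows "x \<in> X \<Longrightarrow> le x x"
    and "\<lbrakk>x \<in> X; y \<in> X; z \<in> X; le x y; le y z\<rbrakk> \<Longrightarrow> le x z"
  using assms unfolding preorder_on_def by blast+

lemma preordered_s_regular_b_metric_antisym:
  assumes space: "preordered_s_regular_b_metric X d s le"
    and "x \<in> X" "y \<in> X" "le x y" "le y x"
  shows "x = y"
proof -
  note bm = preordered_s_regular_b_metricD(1)[OF space]
  have "d x y \<le> s\<^sup>2 * d x x"
    using preordered_s_regular_b_metricD(3)[OF space] assms(2-5) by blast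
  then have "d x y = 0"
    using b_metric_dist_nonneg[OF bm] b_metric_dist_eq_0_iff[OF bm] assms(2,3)
    by (metis mult_zero_right order_antisym)
  then show ?thesis using b_metric_dist_eq_0_iff[OF bm] assms(2,3) by blast
qed

lemma isotoneD: "isotone X le T \<Longrightarrow> x \<in> X \<Longrightarrow> y \<in> X \<Longrightarrow> le x y \<Longrightarrow> le (T x) (T y)"
  unfolding isotone_def by blast

lemma funpow_closed: "f ` X \<subseteq> X \<Longrightarrow> x \<in> X \<Longrightarrow> (f ^^ n) x \<in> X"
  by (induction n) auto

lemma isotone_funpow_le:
  assumes po: "preorder_on X le" and iso: "isotone X le T" and TX: "T ` X \<subseteq> X"
    and w: "w \<in> X" "le (T w) w"
  shows "le ((T ^^ n) w) w"
proof (induction n)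
  case 0
  show ?case using preorder_onD(1)[OF po w(1)] by simp
next
  case (Suc n)
  have "le (T ((T ^^ n) w)) (T w)"
    by (rule isotoneD[OF iso funpow_closed[OF TX w(1)] w(1) Suc])
  then have "le (T ((T ^^ n) w)) w"
    using preorder_onD(2)[OF po _ _ w(1) _ w(2)] funpow_closed[OF TX w(1), of "Suc n"] TX w(1)
    by auto
  then show ?case by simp
qed

lemma coincidence_of_orbit_limit:
  assumes space: "preordered_s_regular_b_metric X d s le"
    and TX: "T ` X \<subseteq> X" and SX: "S ` X \<subseteq> X" and iso: "isotone X le T"
    and w: "w \<in> X" "le (T w) w" "le (T w) (S w)"
    and z: "z \<in> X" "\<And>i. le (S w) ((S ^^ i) z)"
    and lim: "(\<lambda>i. d ((T ^^ i) w) ((S ^^ i) z)) \<longlonglongrightarrow> 0"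
  shows "T w = S w"
proof -
  note bm = preordered_s_regular_b_metricD(1)[OF space]
  note po = preordered_s_regular_b_metricD(2)[OF space]
  have TwX: "T w \<in> X" and SwX: "S w \<in> X" using w TX SX by auto
  have bound: "d (T w) (S w) \<le> s\<^sup>2 * (s\<^sup>2 * d ((T ^^ Suc i) w) ((S ^^ Suc i) z))" for i
  proof -
    define a where "a = (T ^^ Suc i) w"
    define b where "b = (S ^^ Suc i) z"
    have aX: "a \<in> X" and bX: "b \<in> X"
      unfolding a_def b_def using funpow_closed[OF TX w(1)] funpow_closed[OF SX z(1)] .
    have "le (T ((T ^^ i) w)) (T w)"
      using isotone_funpow_le[OF po iso TX w(1,2)]
      by (rule isotoneD[OF iso funpow_closed[OF TX w(1)] w(1)])
    then have aTw: "le a (T w)" unfolding a_def by simp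
    then have aSw: "le a (S w)" using preorder_onD(2)[OF po aX TwX SwX] w(3) by blast
    have "d (T w) (S w) \<le> s\<^sup>2 * d a (S w)"
      using preordered_s_regular_b_metricD(4)[OF space aX TwX SwX aTw w(3)] .
    also have "\<dots> \<le> s\<^sup>2 * (s\<^sup>2 * d a b)"
      using preordered_s_regular_b_metricD(3)[OF space aX SwX bX aSw z(2)[of "Suc i", folded b_def]]
      by (rule mult_left_mono) simp
    finally show ?thesis unfolding a_def b_def .
  qed
  have "(\<lambda>i. s\<^sup>2 * (s\<^sup>2 * d ((T ^^ Suc i) w) ((S ^^ Suc i) z))) \<longlonglongrightarrow> s\<^sup>2 * (s\<^sup>2 * 0)"
    using LIMSEQ_Suc[OF lim] by (intro tendsto_mult tendsto_const) simp
  then have "d (T w) (S w) \<le> s\<^sup>2 * (s\<^sup>2 * 0)"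
    by (rule LIMSEQ_le_const) (use bound in blast)
  then have "d (T w) (S w) = 0" using b_metric_dist_nonneg[OF bm TwX SwX] by simp
  then show ?thesis using b_metric_dist_eq_0_iff[OF bm TwX SwX] by blast
qed

lemma Coin_chain_in_Cstar0:
  assumes po: "preorder_on X le" and SX: "S ` X \<subseteq> X" and iso: "isotone X le T"
    and C: "is_chain X le C" "C \<subseteq> Coin X T S \<inter> Ostar X le x0"
  shows "C \<in> Cstar0 X x0 T S le"
proof -
  have coin: "a \<in> X" "T a = S a" "a \<in> Ostar X le x0" if "a \<in> C" for a
    using C(2) that unfolding Coin_def by auto
  have "le (S a) (T a)" if "a \<in> C" for a
    using coin[OF that] SX preorder_onD(1)[OF po] by auto
  moreover have "le (T a) (S b)" if "a \<in> C" "b \<in> C" "strict le a b" for a b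
    using isotoneD[OF iso] coin that unfolding strict_def by metis
  moreover have "S ` C \<subseteq> T ` Ostar X le x0"
    using coin by (metis image_eqI image_subsetI)
  moreover have "T ` Ostar X le x0 \<subseteq> T ` X" unfolding Ostar_def by auto
  ultimately show ?thesis
    using C coin unfolding Cstar0_def Cstar_def by blast
qed

lemma singleton_in_Cstar0:
  assumes po: "preorder_on X le" and iso: "isotone X le T"
    and x0X: "x0 \<in> X" and y: "y \<in> X" "le x0 y" "S y = T x0"
  shows "{y} \<in> Cstar0 X x0 T S le"
proof -
  have x0O: "x0 \<in> Ostar X le x0" and yO: "y \<in> Ostar X le x0"
    using preorder_onD(1)[OF po] x0X y unfolding Ostar_def by auto
  have "le (S y) (T y)" using isotoneD[OF iso x0X y(1,2)] y(3) by simp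
  moreover have "S y \<in> T ` Ostar X le x0" "S y \<in> T ` X" using x0O x0X y(3) by auto
  ultimately show ?thesis
    using y(1) yO preorder_onD(1)[OF po y(1)]
    unfolding Cstar0_def Cstar_def is_chain_def strict_def by auto
qed

lemma maximal_in_exists_Zorn:
  assumes po: "preorder_on X le" and AX: "A \<subseteq> X" and "A \<noteq> {}"
    and antisym: "\<And>x y. x \<in> A \<Longrightarrow> y \<in> A \<Longrightarrow> le x y \<Longrightarrow> le y x \<Longrightarrow> x = y"
    and chains: "\<And>C. is_chain X le C \<Longrightarrow> C \<subseteq> A \<Longrightarrow> C \<noteq> {} \<Longrightarrow> \<exists>u\<in>A. \<forall>x\<in>C. le x u"
  shows "\<exists>w. maximal_in le A w"
proof -
  have "\<exists>m\<in>A. \<forall>a\<in>A. le m a \<longrightarrow> a = m"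
  proof (rule predicate_Zorn)
    show "partial_order_on A (relation_of le A)"
    proof (rule partial_order_on_relation_ofI)
      show "le a a" if "a \<in> A" for a
        using preorder_onD(1)[OF po] AX that by blast
      show "le a c" if "a \<in> A" "b \<in> A" "c \<in> A" "le a b" "le b c" for a b c
        using preorder_onD(2)[OF po] AX that by (meson subsetD)
    qed (rule antisym)
  next
    fix C assume C: "C \<in> Chains (relation_of le A)"
    have "C \<subseteq> A" using Chains_relation_of[OF C] .
    moreover have "is_chain X le C"
      using C AX unfolding Chains_def relation_of_def is_chain_def by blast
    ultimately show "\<exists>u\<in>A. \<forall>a\<in>C. le a u"
      using chains \<open>A \<noteq> {}\<close> by (cases "C = {}") auto
  qed
  then show ?thesis unfolding maximal_in_def strict_def by blast
qed

theorem theorem2p2: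
  fixes X :: "'a set" and d :: "'a \<Rightarrow> 'a \<Rightarrow> real" and s :: real
    and le :: "'a \<Rightarrow> 'a \<Rightarrow> bool" and T S :: "'a \<Rightarrow> 'a" and x0 :: 'a
  assumes space: "preordered_s_regular_b_metric X d s le"
    and TX: "T ` X \<subseteq> X" and SX: "S ` X \<subseteq> X"
    and x0X: "x0 \<in> X" and x0: "le (S x0) (T x0)"
    and iso: "isotone X le T"
    and cover: "covers_from_above X le S T (Ostar X le x0)"
    and chains: "\<forall>C\<in>Cstar0 X x0 T S le. \<exists>w\<in>X. (\<forall>x\<in>C. le x w) \<and> le (T w) w \<and>
        (\<exists>z\<in>X. (\<forall>i::nat. le (S w) ((S ^^ i) z) \<and> le (T w) (S w)) \<and>
           (\<lambda>i. d ((T ^^ i) w) ((S ^^ i) z)) \<longlonglongrightarrow> 0)"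
  shows "Coin X T S \<inter> Ostar X le x0 \<noteq> {} \<and>
         (\<exists>w. maximal_in le (Coin X T S \<inter> Ostar X le x0) w)"
proof -
  note po = preordered_s_regular_b_metricD(2)[OF space]
  define A where "A = Coin X T S \<inter> Ostar X le x0"
  have AX: "A \<subseteq> X" unfolding A_def Coin_def by auto
  have chain_bound: "\<exists>w\<in>A. \<forall>x\<in>C. le x w"
    if C: "C \<in> Cstar0 X x0 T S le" "x \<in> C" for C x
  proof -
    obtain w z where w: "w \<in> X" "\<forall>x\<in>C. le x w" "le (T w) w" and z: "z \<in> X"
      "\<And>i. le (S w) ((S ^^ i) z)" "le (T w) (S w)"
      "(\<lambda>i. d ((T ^^ i) w) ((S ^^ i) z)) \<longlonglongrightarrow> 0"
      using chains C(1) by blast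
    have "T w = S w"
      using coincidence_of_orbit_limit[OF space TX SX iso w(1,3) z(3) z(1,2,4)] .
    moreover have "le x0 w"
      using C w preorder_onD(2)[OF po] x0X unfolding Cstar0_def Ostar_def by blast
    ultimately show ?thesis using w unfolding A_def Coin_def Ostar_def by auto
  qed
  obtain y where y: "y \<in> X" "le x0 y" "S y = T x0"
    using cover x0 x0X preorder_onD(1)[OF po]
    unfolding covers_from_above_def Ostar_def by blast
  have "A \<noteq> {}"
    using chain_bound[OF singleton_in_Cstar0[where S = S, OF po iso x0X y]] by blast
  moreover have "\<exists>w. maximal_in le A w"
  proof (rule maximal_in_exists_Zorn[OF po AX \<open>A \<noteq> {}\<close>])
    show "x = y" if "x \<in> A" "y \<in> A" "le x y" "le y x" for x y
      using preordered_s_regular_b_metric_antisym[OF space] that AX by blast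
    show "\<exists>u\<in>A. \<forall>x\<in>C. le x u" if "is_chain X le C" "C \<subseteq> A" "C \<noteq> {}" for C
      using chain_bound Coin_chain_in_Cstar0[OF po SX iso] that unfolding A_def by blast
  qed
  ultimately show ?thesis unfolding A_def by blast
qed

end
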